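(* Let $A\subset\mathbb{Z}^d$ be finite with $\mathbb{Z}$-linear span $\mathbb{Z}^d$, $f=\bigoplus_{i\in A}p_i\odot w^i$ a tropical polynomial with support $A$, and $q\in\mathcal{T}(f)$ a point lying in the relative interior of a cell $\sigma^*$ of $\mathcal{T}(f)$ whose dual marked cell $\sigma$ is a pyramid. Then $q$ is not a singular point of $\mathcal{T}(f)$. In particular, if the marked coherent subdivision $\Pi_p$ is a triangulation, then $\mathcal{T}(f)$ is non-singular.
   Context: $\mathbb{K}$ is an algebraically closed field of characteristic $0$ with a rank-one non-archimedean valuation $val$ whose residue field has characteristic $0$. Tropical operations $\oplus=\min$, $\odot=+$; $f(w)=\min_{i\in A}(p_i+\langle i,w\rangle)$, all $p_i\in\mathbb{R}$; $\mathcal{T}(f)$ is the set of $w$ where this minimum is attained for at least two distinct $i$. A point $q\in\mathcal{T}(f)$ is singular if there exist $F=\sum_{i\in A}a_ix^i$ over $\mathbb{K}$ with $val(a_i)=p_i$ for all $i$ and $b\in(\mathbb{K}^* )^d$ with $val(b)=q$ such that $F(b)=0$ and all $\partial F/\partial x_j(b)=0$; $\mathcal{T}(f)$ is non-singular if it has no singular point. For $q\in\mathbb{R}^d$ let $\sigma_q=\{i\in A: p_i+\langle i,q\rangle=f(q)\}$. The marked coherent subdivision $\Pi_p$ of the convex hull of $A$ is the collection of the sets $\sigma_q$, $q\in\mathbb{R}^d$ (its marked cells). For a marked cell $\sigma$, its dual cell $\sigma^*$ is the closure of $\{q:\sigma_q=\sigma\}$, and $q$ lies in the relative interior of $\sigma^*$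 iff $\sigma_q=\sigma$. A finite set $\sigma\subset\mathbb{R}^d$ is a pyramid if some $i\in\sigma$ does not lie in the affine span of $\sigma\setminus\{i\}$. $\Pi_p$ is a triangulation if every marked cell is affinely independent. *)

theory Defs
  imports "HOL-Analysis.Analysis" "HOL-Computational_Algebra.Polynomial"
begin

text \<open>A rank-one non-archimedean valuation on a field: a real-valued map defined
on nonzero elements (its value at 0 is irrelevant and plays the role of +infinity).\<close>
definition rank_one_nonarch_valuation :: "('k::field \<Rightarrow> real) \<Rightarrow> bool" where
  "rank_one_nonarch_valuation val \<longleftrightarrow>
     (\<forall>x y. x \<noteq> 0 \<longrightarrow> y \<noteq> 0 \<longrightarrow> val (x * y) = val x + val y) \<and>
     (\<forall>x y. x \<noteq> 0 \<longrightarrow> y \<noteq> 0 \<longrightarrow> x + y \<noteq> 0 \<longrightarrow> val (x + y) \<ge> min (val x) (val y))"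

definition alg_closed_field :: "'k::field itself \<Rightarrow> bool" where
  "alg_closed_field _ \<longleftrightarrow> (\<forall>P :: 'k poly. degree P > 0 \<longrightarrow> (\<exists>x. poly P x = 0))"

definition val_ring :: "('k::field \<Rightarrow> real) \<Rightarrow> 'k set" where
  "val_ring val = {x. x = 0 \<or> val x \<ge> 0}"

definition val_max_ideal :: "('k::field \<Rightarrow> real) \<Rightarrow> 'k set" where
  "val_max_ideal val = {x. x = 0 \<or> val x > 0}"

text \<open>The residue field has characteristic 0: n * 1 is nonzero in the residue field
for every positive integer n, i.e. n * 1 does not lie in the maximal ideal.\<close>
definition residue_char_zero :: "('k::field \<Rightarrow> real) \<Rightarrow> bool" where
  "residue_char_zero val \<longleftrightarrow> (\<forall>n::nat. n > 0 \<longrightarrow> (of_nat n :: 'k) \<notin> val_max_ideal val)"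

definition emb :: "int^'d \<Rightarrow> real^'d" where
  "emb i = (\<chi> j. real_of_int (i $ j))"

definition int_span :: "(int^'d) set \<Rightarrow> (int^'d) set" where
  "int_span A = {v. \<exists>c :: int^'d \<Rightarrow> int. v = (\<Sum>i\<in>A. c i *s i)}"

definition trop_eval :: "(int^'d) set \<Rightarrow> (int^'d \<Rightarrow> real) \<Rightarrow> real^'d \<Rightarrow> real" where
  "trop_eval A p w = Min ((\<lambda>i. p i + emb i \<bullet> w) ` A)"

definition sigma_cell :: "(int^'d) set \<Rightarrow> (int^'d \<Rightarrow> real) \<Rightarrow> real^'d \<Rightarrow> (int^'d) set" where
  "sigma_cell A p q = {i\<in>A. p i + emb i \<bullet> q = trop_eval A p q}"

definition trop_hypersurface :: "(int^'d) set \<Rightarrow> (int^'d \<Rightarrow> real) \<Rightarrow> (real^'d) set" where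
  "trop_hypersurface A p = {w. \<exists>i\<in>A. \<exists>j\<in>A. i \<noteq> j \<and>
      p i + emb i \<bullet> w = trop_eval A p w \<and> p j + emb j \<bullet> w = trop_eval A p w}"

definition marked_cells :: "(int^'d) set \<Rightarrow> (int^'d \<Rightarrow> real) \<Rightarrow> (int^'d) set set" where
  "marked_cells A p = range (sigma_cell A p)"

definition is_pyramid :: "(int^'d) set \<Rightarrow> bool" where
  "is_pyramid \<sigma> \<longleftrightarrow> (\<exists>i\<in>\<sigma>. emb i \<notin> affine hull (emb ` (\<sigma> - {i})))"

definition is_triangulation :: "(int^'d) set \<Rightarrow> (int^'d \<Rightarrow> real) \<Rightarrow> bool" where
  "is_triangulation A p \<longleftrightarrow> (\<forall>\<sigma>\<in>marked_cells A p. \<not> affine_dependent (emb ` \<sigma>))"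

definition mono_eval :: "'k::field^'d \<Rightarrow> int^'d \<Rightarrow> 'k" where
  "mono_eval b i = (\<Prod>j\<in>UNIV. (b $ j) powi (i $ j))"

definition lpoly_eval :: "(int^'d) set \<Rightarrow> (int^'d \<Rightarrow> 'k::field) \<Rightarrow> 'k^'d \<Rightarrow> 'k" where
  "lpoly_eval A a b = (\<Sum>i\<in>A. a i * mono_eval b i)"

definition lpoly_deriv_eval :: "(int^'d) set \<Rightarrow> (int^'d \<Rightarrow> 'k::field) \<Rightarrow> 'd \<Rightarrow> 'k^'d \<Rightarrow> 'k" where
  "lpoly_deriv_eval A a j b = (\<Sum>i\<in>A. a i * of_int (i $ j) * mono_eval b (i - axis j 1))"

definition trop_singular_point ::
  "('k::field \<Rightarrow> real) \<Rightarrow> (int^'d) set \<Rightarrow> (int^'d \<Rightarrow> real) \<Rightarrow> real^'d \<Rightarrow> bool" where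
  "trop_singular_point val A p q \<longleftrightarrow> q \<in> trop_hypersurface A p \<and>
     (\<exists>(a :: int^'d \<Rightarrow> 'k) (b :: 'k^'d).
        (\<forall>i\<in>A. a i \<noteq> 0 \<and> val (a i) = p i) \<and>
        (\<forall>j. b $ j \<noteq> 0 \<and> val (b $ j) = q $ j) \<and>
        lpoly_eval A a b = 0 \<and>
        (\<forall>j. lpoly_deriv_eval A a j b = 0))"

definition trop_nonsingular ::
  "('k::field \<Rightarrow> real) \<Rightarrow> (int^'d) set \<Rightarrow> (int^'d \<Rightarrow> real) \<Rightarrow> bool" where
  "trop_nonsingular val A p \<longleftrightarrow> (\<forall>q\<in>trop_hypersurface A p. \<not> trop_singular_point val A p q)"

end

theory Submission
  imports Defs
begin

text \<open>Let \<open>i\<^sub>0\<close> be an apex of the pyramid \<open>\<sigma>\<close> and let \<open>l\<close> be an integer affine function vanishing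
on \<open>\<sigma> - {i\<^sub>0}\<close> with \<open>l i\<^sub>0 \<noteq> 0\<close>. At a singular point \<open>b\<close> of \<open>F = \<Sum> a\<^sub>i x\<^sup>i\<close> the Euler relations
give \<open>\<Sum> l(i) a\<^sub>i b\<^sup>i = 0\<close>. Since \<open>val b = q\<close>, the term \<open>i\<^sub>0\<close> has valuation \<open>f(q)\<close> (integers are units
because the residue field has characteristic 0), whereas every other nonzero term either lies
outside \<open>\<sigma>\<close>, hence has valuation \<open>> f(q)\<close>, or is killed by \<open>l\<close>. A sum with a unique term of minimal
valuation cannot vanish.\<close>

locale nonarch_valuation =
  fixes val :: "'k::field \<Rightarrow> real"
  assumes rank_one: "rank_one_nonarch_valuation val"
begin

lemma val_mult: "x \<noteq> 0 \<Longrightarrow> y \<noteq> 0 \<Longrightarrow> val (x * y) = val x + val y"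
  using rank_one unfolding rank_one_nonarch_valuation_def by blast

lemma val_add_ge_min:
  "x \<noteq> 0 \<Longrightarrow> y \<noteq> 0 \<Longrightarrow> x + y \<noteq> 0 \<Longrightarrow> val (x + y) \<ge> min (val x) (val y)"
  using rank_one unfolding rank_one_nonarch_valuation_def by blast

lemma val_one: "val 1 = 0"
  using val_mult[of 1 1] by simp

lemma val_inverse: "x \<noteq> 0 \<Longrightarrow> val (inverse x) = - val x"
  using val_mult[of x "inverse x"] val_one by simp

lemma val_power: "x \<noteq> 0 \<Longrightarrow> val (x ^ n) = real n * val x"
  by (induction n) (auto simp: val_one val_mult algebra_simps)

lemma val_power_int: "x \<noteq> 0 \<Longrightarrow> val (x powi n) = of_int n * val x"
  by (auto simp: power_int_def val_power val_inverse)

lemma val_prod: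
  "finite S \<Longrightarrow> (\<And>i. i \<in> S \<Longrightarrow> f i \<noteq> 0) \<Longrightarrow> val (prod f S) = (\<Sum>i\<in>S. val (f i))"
  by (induction S rule: finite_induct) (auto simp: val_one val_mult)

lemma val_uminus: "val (- x) = val x"
proof (cases "x = 0")
  case False
  have "val ((-1) * (-1) :: 'k) = 0" using val_one by simp
  then have "val (-1 :: 'k) = 0" using val_mult[of "-1" "-1"] by simp
  then show ?thesis using val_mult[of "-1" x] False by simp
qed simp

lemma val_of_nat_nonneg: "(of_nat n :: 'k) \<noteq> 0 \<Longrightarrow> val (of_nat n :: 'k) \<ge> 0"
proof (induction n)
  case (Suc n)
  show ?case
  proof (cases "(of_nat n :: 'k) = 0")
    case True
    then show ?thesis using val_one by simp
  next
    case False
    have "val (of_nat n + 1 :: 'k) \<ge> min (val (of_nat n :: 'k)) (val 1)"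
      using False Suc.prems by (intro val_add_ge_min) (simp_all add: add.commute)
    then show ?thesis using Suc.IH False val_one by (simp add: add.commute)
  qed
qed simp

lemma val_of_int_eq_0:
  assumes "residue_char_zero val" and "n \<noteq> 0"
  shows "(of_int n :: 'k) \<noteq> 0" and "val (of_int n :: 'k) = 0"
proof -
  have "(of_nat (nat \<bar>n\<bar>) :: 'k) \<notin> val_max_ideal val"
    using assms unfolding residue_char_zero_def by (metis zero_less_nat_eq zero_less_abs_iff)
  then have nz: "(of_nat (nat \<bar>n\<bar>) :: 'k) \<noteq> 0" and "val (of_nat (nat \<bar>n\<bar>) :: 'k) \<le> 0"
    unfolding val_max_ideal_def by auto
  moreover have "(of_int n :: 'k) = of_nat (nat \<bar>n\<bar>) \<or> (of_int n :: 'k) = - of_nat (nat \<bar>n\<bar>)"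
    by (cases "n \<ge> 0") simp_all
  ultimately show "(of_int n :: 'k) \<noteq> 0" and "val (of_int n :: 'k) = 0"
    using val_of_nat_nonneg[OF nz] val_uminus by fastforce+
qed

lemma val_sum_gt:
  "finite S \<Longrightarrow> (\<And>i. i \<in> S \<Longrightarrow> t i = 0 \<or> val (t i) > m) \<Longrightarrow> sum t S = 0 \<or> val (sum t S) > m"
proof (induction S rule: finite_induct)
  case (insert x F)
  then have hF: "sum t F = 0 \<or> val (sum t F) > m" and hx: "t x = 0 \<or> val (t x) > m"
    by auto
  show ?case
  proof (cases "t x = 0 \<or> sum t F = 0 \<or> t x + sum t F = 0")
    case True
    then show ?thesis using hF hx insert.hyps by auto
  next
    case False
    then have "val (t x + sum t F) \<ge> min (val (t x)) (val (sum t F))"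
      by (intro val_add_ge_min) auto
    then show ?thesis using hF hx False insert.hyps by auto
  qed
qed simp

lemma sum_nonzero_if_unique_min_val:
  assumes "finite S" "i\<^sub>0 \<in> S" "t i\<^sub>0 \<noteq> 0"
    and "\<And>i. i \<in> S - {i\<^sub>0} \<Longrightarrow> t i = 0 \<or> val (t i) > val (t i\<^sub>0)"
  shows "sum t S \<noteq> 0"
proof
  assume "sum t S = 0"
  then have "sum t (S - {i\<^sub>0}) = - t i\<^sub>0"
    using assms(1,2) by (simp add: sum.remove eq_neg_iff_add_eq_0 add.commute)
  moreover have "sum t (S - {i\<^sub>0}) = 0 \<or> val (sum t (S - {i\<^sub>0})) > val (t i\<^sub>0)"
    using assms(1,4) by (intro val_sum_gt) auto
  ultimately show False using assms(3) val_uminus by auto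
qed

lemma val_mono_eval:
  "(\<And>j. b $ j \<noteq> 0) \<Longrightarrow> val (mono_eval b i) = (\<Sum>j\<in>UNIV. of_int (i $ j) * val (b $ j))"
  unfolding mono_eval_def by (simp add: val_prod power_int_not_zero val_power_int)

end

lemma mono_eval_nonzero: "(\<And>j. b $ j \<noteq> 0) \<Longrightarrow> mono_eval b i \<noteq> (0::'k::field)"
  unfolding mono_eval_def by (auto simp: power_int_not_zero)

lemma mono_eval_minus_axis:
  fixes b :: "'k::field^'d"
  assumes "\<And>k. b $ k \<noteq> 0"
  shows "mono_eval b (i - axis j 1) * b $ j = mono_eval b i"
proof -
  have rest: "(\<Prod>k\<in>UNIV - {j}. b $ k powi ((i - axis j 1) $ k))
      = (\<Prod>k\<in>UNIV - {j}. b $ k powi (i $ k))"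
    by (rule prod.cong) (auto simp: axis_def)
  have "b $ j powi (i $ j - 1) * b $ j = b $ j powi (i $ j)"
    using assms power_int_add_1[of "b $ j" "i $ j - 1"] by simp
  then show ?thesis
    unfolding mono_eval_def
    by (simp add: prod.remove[of UNIV j] rest axis_def algebra_simps)
qed

lemma lpoly_euler:
  assumes "\<And>k. b $ k \<noteq> 0"
  shows "(\<Sum>i\<in>A. a i * of_int (i $ j) * mono_eval b i) = lpoly_deriv_eval A a j b * b $ j"
  unfolding lpoly_deriv_eval_def sum_distrib_right
  by (rule sum.cong) (simp_all add: mono_eval_minus_axis[OF assms, symmetric] mult.assoc)

definition int_affine :: "int \<Rightarrow> int^'d \<Rightarrow> int^'d \<Rightarrow> int" where
  "int_affine c u i = c + (\<Sum>j\<in>UNIV. u $ j * i $ j)"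

lemma lpoly_affine_weighted_eq_0:
  fixes b :: "'k::field^'d"
  assumes "\<And>k. b $ k \<noteq> 0" and "lpoly_eval A a b = 0" and "\<And>j. lpoly_deriv_eval A a j b = 0"
  shows "(\<Sum>i\<in>A. a i * of_int (int_affine c u i) * mono_eval b i) = 0"
proof -
  have "(\<Sum>i\<in>A. a i * of_int (int_affine c u i) * mono_eval b i)
      = of_int c * lpoly_eval A a b
        + (\<Sum>j\<in>UNIV. of_int (u $ j) * (\<Sum>i\<in>A. a i * of_int (i $ j) * mono_eval b i))"
    by (simp add: int_affine_def lpoly_eval_def algebra_simps sum.distrib sum_distrib_left
        sum_distrib_right sum.swap[of _ UNIV A])
  also have "\<dots> = 0"
    using assms by (simp add: lpoly_euler)
  finally show ?thesis .
qed

lemma rat_vec_common_denominator: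
  fixes x :: "rat^'d"
  obtains D :: int and z :: "int^'d" where "D > 0" and "\<And>j. of_int D * x $ j = of_int (z $ j)"
proof -
  define D where "D = (\<Prod>j\<in>UNIV. snd (quotient_of (x $ j)))"
  define z where "z = (\<chi> j. fst (quotient_of (x $ j)) * (D div snd (quotient_of (x $ j))))"
  have "of_int D * x $ j = of_int (z $ j)" for j
  proof -
    obtain n e where ne: "quotient_of (x $ j) = (n, e)" by fastforce
    have "e dvd D" unfolding D_def using ne by (metis UNIV_I dvd_prodI finite snd_conv)
    then obtain c where "D = e * c" ..
    moreover have "e > 0" using quotient_of_denom_pos[OF ne] .
    ultimately show ?thesis using quotient_of_div[OF ne] ne by (simp add: z_def)
  qed
  moreover have "D > 0" unfolding D_def by (intro prod_pos) (simp add: quotient_of_denom_pos')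
  ultimately show thesis by (rule that[rotated])
qed

definition rat_vec_of_int :: "int^'d \<Rightarrow> rat^'d" where
  "rat_vec_of_int x = (\<chi> j. of_int (x $ j))"

lemma emb_in_span_if_rat_span:
  assumes "rat_vec_of_int v \<in> vec.span (rat_vec_of_int ` W)"
  shows "emb v \<in> span (emb ` W)"
proof -
  obtain T r where T: "finite T" "T \<subseteq> rat_vec_of_int ` W"
    and v: "rat_vec_of_int v = (\<Sum>x\<in>T. r x *s x)"
    using assms unfolding vec.span_explicit by blast
  have "emb v = (\<Sum>x\<in>T. of_rat (r x) *\<^sub>R (\<chi> j. of_rat (x $ j)))"
  proof (subst vec_eq_iff, intro allI)
    fix j
    have "emb v $ j = of_rat (rat_vec_of_int v $ j)" by (simp add: rat_vec_of_int_def emb_def)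
    then show "emb v $ j = (\<Sum>x\<in>T. of_rat (r x) *\<^sub>R (\<chi> j. (of_rat (x $ j) :: real))) $ j"
      by (simp add: v sum_component of_rat_sum of_rat_mult)
  qed
  also have "\<dots> \<in> span (emb ` W)"
  proof (intro span_sum span_scale span_base)
    fix x assume "x \<in> T"
    then obtain w where "w \<in> W" "x = rat_vec_of_int w" using T by auto
    then show "(\<chi> j. of_rat (x $ j)) \<in> emb ` W" by (simp add: rat_vec_of_int_def emb_def)
  qed
  finally show ?thesis .
qed

lemma rat_functional_separating:
  fixes v :: "rat^'d"
  assumes "v \<notin> vec.span W"
  obtains g :: "rat^'d"
  where "\<And>w. w \<in> W \<Longrightarrow> (\<Sum>j\<in>UNIV. g $ j * w $ j) = 0" and "(\<Sum>j\<in>UNIV. g $ j * v $ j) = 1"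
proof -
  obtain B where B: "B \<subseteq> W" "vec.independent B" "W \<subseteq> vec.span B"
    using vec.maximal_independent_subset by metis
  have "v \<notin> vec.span B" using assms vec.span_mono[OF B(1)] by blast
  then have ind: "vec.independent (insert v B)" using B(2) by (rule vec.independent_insertI)
  obtain h :: "rat^'d \<Rightarrow> rat^'d" where h: "Vector_Spaces.linear (*s) (*s) h"
    and h_ins: "\<forall>x\<in>insert v B. h x = (if x = v then 1 else 0)"
    using vec.linear_independent_extend[OF ind, of "\<lambda>x. if x = v then 1 else 0"] by blast
  have h_W: "h w = 0" if "w \<in> W" for w
  proof -
    have "h x = 0" if "x \<in> B" for x using h_ins that \<open>v \<notin> vec.span B\<close> vec.span_base by fastforce
    then show ?thesis using vec.linear_eq_0_on_span[OF h] B(3) that by blast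
  qed
  \<comment> \<open>\<open>h\<close> takes only the constant values \<open>0\<close> and \<open>1\<close>, so any row of its matrix will do.\<close>
  have row: "(\<Sum>j\<in>UNIV. matrix h $ undefined $ j * x $ j) = h x $ undefined" for x
    using matrix_works[OF h, of x] by (simp add: matrix_vector_mult_def vec_eq_iff)
  show thesis
  proof (rule that[of "matrix h $ undefined"])
    show "(\<Sum>j\<in>UNIV. matrix h $ undefined $ j * w $ j) = 0" if "w \<in> W" for w
      using h_W[OF that] by (simp add: row)
    show "(\<Sum>j\<in>UNIV. matrix h $ undefined $ j * v $ j) = 1"
      using h_ins by (simp add: row)
  qed
qed

text \<open>Separate over \<open>\<rat>\<close>, where linear algebra applies, then clear denominators.\<close>
lemma int_functional_separating:
  assumes "emb v \<notin> span (emb ` W)"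
  obtains u :: "int^'d"
  where "\<And>w. w \<in> W \<Longrightarrow> (\<Sum>j\<in>UNIV. u $ j * w $ j) = 0" and "(\<Sum>j\<in>UNIV. u $ j * v $ j) \<noteq> 0"
proof -
  have "rat_vec_of_int v \<notin> vec.span (rat_vec_of_int ` W)"
    using emb_in_span_if_rat_span assms by blast
  then obtain g where g0: "\<And>w. w \<in> rat_vec_of_int ` W \<Longrightarrow> (\<Sum>j\<in>UNIV. g $ j * w $ j) = 0"
    and g1: "(\<Sum>j\<in>UNIV. g $ j * rat_vec_of_int v $ j) = 1"
    using rat_functional_separating by blast
  obtain D :: int and u :: "int^'d" where D: "D > 0" and u: "\<And>j. of_int D * g $ j = of_int (u $ j)"
    using rat_vec_common_denominator[of g] by blast
  have scaled: "of_int (\<Sum>j\<in>UNIV. u $ j * x $ j) = of_int D * (\<Sum>j\<in>UNIV. g $ j * rat_vec_of_int x $ j)"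
    for x by (simp add: u[symmetric] rat_vec_of_int_def sum_distrib_left mult.assoc)
  show thesis
  proof
    show "(\<Sum>j\<in>UNIV. u $ j * w $ j) = 0" if "w \<in> W" for w
      using scaled[of w] g0[OF imageI[OF that]] by (simp del: of_int_sum of_int_mult)
    show "(\<Sum>j\<in>UNIV. u $ j * v $ j) \<noteq> 0"
      using scaled[of v] g1 D by (simp del: of_int_sum of_int_mult)
  qed
qed

lemma emb_diff: "emb (x - y) = emb x - emb y"
  by (simp add: emb_def vec_eq_iff)

lemma int_affine_separating:
  fixes S :: "(int^'d) set"
  assumes "emb v \<notin> affine hull (emb ` S)"
  obtains c u where "\<And>s. s \<in> S \<Longrightarrow> int_affine c u s = 0" and "int_affine c u v \<noteq> 0"
proof (cases "S = {}")
  case True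
  then show thesis by (intro that[of 1 0]) (simp_all add: int_affine_def)
next
  case False
  then obtain s\<^sub>0 where s\<^sub>0: "s\<^sub>0 \<in> S" by blast
  define T where "T = (\<lambda>x. - emb s\<^sub>0 + x) ` (emb ` S - {emb s\<^sub>0})"
  have hull: "affine hull (emb ` S) = (\<lambda>x. emb s\<^sub>0 + x) ` span T"
    unfolding T_def by (rule affine_hull_span2) (use s\<^sub>0 in auto)
  have "emb ` (\<lambda>s. s - s\<^sub>0) ` S \<subseteq> span T"
  proof
    fix y assume "y \<in> emb ` (\<lambda>s. s - s\<^sub>0) ` S"
    then obtain s where s: "s \<in> S" "y = - emb s\<^sub>0 + emb s" by (auto simp: emb_diff)
    show "y \<in> span T"
    proof (cases "emb s = emb s\<^sub>0")
      case False
      then have "y \<in> T" using s unfolding T_def by blast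
      then show ?thesis by (rule span_base)
    qed (simp add: s span_zero)
  qed
  then have "span (emb ` (\<lambda>s. s - s\<^sub>0) ` S) \<subseteq> span T"
    by (simp add: span_minimal)
  moreover have "emb (v - s\<^sub>0) \<notin> span T"
  proof
    assume "emb (v - s\<^sub>0) \<in> span T"
    then have "emb s\<^sub>0 + emb (v - s\<^sub>0) \<in> affine hull (emb ` S)" unfolding hull by blast
    then show False using assms by (simp add: emb_diff)
  qed
  ultimately have "emb (v - s\<^sub>0) \<notin> span (emb ` (\<lambda>s. s - s\<^sub>0) ` S)" by blast
  then obtain u where u0: "\<And>w. w \<in> (\<lambda>s. s - s\<^sub>0) ` S \<Longrightarrow> (\<Sum>j\<in>UNIV. u $ j * w $ j) = 0"
    and u1: "(\<Sum>j\<in>UNIV. u $ j * (v - s\<^sub>0) $ j) \<noteq> 0"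
    using int_functional_separating by blast
  have shift: "int_affine (- (\<Sum>j\<in>UNIV. u $ j * s\<^sub>0 $ j)) u x = (\<Sum>j\<in>UNIV. u $ j * (x - s\<^sub>0) $ j)"
    for x by (simp add: int_affine_def right_diff_distrib sum_subtractf)
  show thesis
  proof (rule that)
    show "int_affine (- (\<Sum>j\<in>UNIV. u $ j * s\<^sub>0 $ j)) u s = 0" if "s \<in> S" for s
      unfolding shift using u0 that by blast
    show "int_affine (- (\<Sum>j\<in>UNIV. u $ j * s\<^sub>0 $ j)) u v \<noteq> 0"
      unfolding shift by (rule u1)
  qed
qed

lemma trop_eval_lt_outside_sigma_cell:
  assumes "finite A" "i \<in> A" "i \<notin> sigma_cell A p q"
  shows "trop_eval A p q < p i + emb i \<bullet> q"
proof -
  have "trop_eval A p q \<le> p i + emb i \<bullet> q"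
    unfolding trop_eval_def using assms(1,2) by (intro Min_le) auto
  then show ?thesis using assms(2,3) unfolding sigma_cell_def by auto
qed

lemma (in nonarch_valuation) pyramid_cell_not_singular:
  assumes "residue_char_zero val" "finite A" "is_pyramid (sigma_cell A p q)"
  shows "\<not> trop_singular_point val A p q"
proof
  assume "trop_singular_point val A p q"
  then obtain a b where a: "\<And>i. i \<in> A \<Longrightarrow> a i \<noteq> 0 \<and> val (a i) = p i"
    and b: "\<And>j. b $ j \<noteq> 0 \<and> val (b $ j) = q $ j"
    and crit: "lpoly_eval A a b = 0" "\<And>j. lpoly_deriv_eval A a j b = 0"
    unfolding trop_singular_point_def by blast
  define \<sigma> where "\<sigma> = sigma_cell A p q"
  obtain i\<^sub>0 where i\<^sub>0: "i\<^sub>0 \<in> \<sigma>" "emb i\<^sub>0 \<notin> affine hull (emb ` (\<sigma> - {i\<^sub>0}))"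
    using assms(3) unfolding is_pyramid_def \<sigma>_def by blast
  then obtain c u where l0: "\<And>s. s \<in> \<sigma> - {i\<^sub>0} \<Longrightarrow> int_affine c u s = 0"
    and l1: "int_affine c u i\<^sub>0 \<noteq> 0"
    using int_affine_separating by blast
  define t where "t i = a i * of_int (int_affine c u i) * mono_eval b i" for i
  have "sum t A = 0"
    unfolding t_def using b crit by (intro lpoly_affine_weighted_eq_0) auto
  moreover have t_val: "t i \<noteq> 0" "val (t i) = p i + emb i \<bullet> q"
    if "i \<in> A" "int_affine c u i \<noteq> 0" for i
  proof -
    have nz: "a i \<noteq> 0" "(of_int (int_affine c u i) :: 'k) \<noteq> 0" "mono_eval b i \<noteq> 0"
      using a that val_of_int_eq_0[OF assms(1)] mono_eval_nonzero[of b] b by auto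
    then show "t i \<noteq> 0" unfolding t_def by simp
    have "val (mono_eval b i) = emb i \<bullet> q"
      using b by (simp add: val_mono_eval emb_def inner_vec_def)
    then show "val (t i) = p i + emb i \<bullet> q"
      using nz a that val_of_int_eq_0[OF assms(1)] by (simp add: t_def val_mult)
  qed
  moreover have "i\<^sub>0 \<in> A" using i\<^sub>0(1) unfolding \<sigma>_def sigma_cell_def by blast
  moreover have "t i = 0 \<or> val (t i) > val (t i\<^sub>0)" if "i \<in> A - {i\<^sub>0}" for i
  proof (cases "int_affine c u i = 0")
    case False
    then have "i \<notin> \<sigma>" using l0 that by blast
    then have "val (t i\<^sub>0) < val (t i)"
      using t_val[OF _ False] t_val[OF \<open>i\<^sub>0 \<in> A\<close> l1] i\<^sub>0(1) that assms(2)
        trop_eval_lt_outside_sigma_cell[of A i p q]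
      unfolding \<sigma>_def sigma_cell_def by auto
    then show ?thesis by blast
  qed (simp add: t_def)
  ultimately show False
    using sum_nonzero_if_unique_min_val[OF assms(2)] l1 by blast
qed

lemma affine_independent_imp_pyramid:
  assumes "\<not> affine_dependent (emb ` \<sigma>)" and "i \<in> \<sigma>"
  shows "is_pyramid \<sigma>"
proof -
  have "inj emb" unfolding inj_def emb_def by (simp add: vec_eq_iff)
  then have "emb ` \<sigma> - {emb i} = emb ` (\<sigma> - {i})" by (auto dest: injD)
  moreover have "emb i \<notin> affine hull (emb ` \<sigma> - {emb i})"
    using assms unfolding affine_dependent_def by blast
  ultimately show ?thesis
    using assms(2) unfolding is_pyramid_def by auto
qed

theorem lemma3p1:
  fixes val :: "'k::field_char_0 \<Rightarrow> real"
    and A :: "(int^'d) set" and p :: "int^'d \<Rightarrow> real"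
  assumes "alg_closed_field TYPE('k)"
    and "rank_one_nonarch_valuation val"
    and "residue_char_zero val"
    and "finite A"
    and "int_span A = UNIV"
  shows "(\<forall>q \<in> trop_hypersurface A p. is_pyramid (sigma_cell A p q)
             \<longrightarrow> \<not> trop_singular_point val A p q)
       \<and> (is_triangulation A p \<longrightarrow> trop_nonsingular val A p)"
proof -
  interpret nonarch_valuation val by unfold_locales (rule assms(2))
  have pyramid: "\<not> trop_singular_point val A p q" if "is_pyramid (sigma_cell A p q)" for q
    using pyramid_cell_not_singular assms(3,4) that by blast
  moreover have "trop_nonsingular val A p" if "is_triangulation A p"
    unfolding trop_nonsingular_def
  proof
    fix q assume "q \<in> trop_hypersurface A p"
    then obtain i where "i \<in> sigma_cell A p q"
      unfolding trop_hypersurface_def sigma_cell_def by blast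
    moreover have "\<not> affine_dependent (emb ` sigma_cell A p q)"
      using that unfolding is_triangulation_def marked_cells_def by blast
    ultimately show "\<not> trop_singular_point val A p q"
      using pyramid affine_independent_imp_pyramid by blast
  qed
  ultimately show ?thesis by blast
qed

end
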